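(* Let $m\ge 2$, and let $\omega=\sum_i\omega_i|e_i\rangle\langle e_i|$ and $\omega'=\sum_i\omega'_i|f_i\rangle\langle f_i|$ be $n$-dimensional density matrices, diagonal in (possibly different) orthonormal bases $\{|e_i\rangle\}$ and $\{|f_i\rangle\}$. Suppose $\omega\otimes\frac{1}{m}\mathbb{I}_m\succ\omega'\otimes|0\rangle\langle 0|$. Then there exists a density matrix $\tilde\omega=\sum_i\tilde\omega_i|e_i\rangle\langle e_i|$, diagonal in the basis $\{|e_i\rangle\}$, such that $d(\omega,\omega')\ge d(\omega,\tilde\omega)$ and $\omega\otimes\frac{1}{m}\mathbb{I}_m\succ\tilde\omega\otimes|0\rangle\langle 0|$.
   Context: For density matrices $\rho,\sigma$, $\rho\succ\sigma$ means that the vector of eigenvalues of $\rho$ majorizes that of $\sigma$ (vectors padded with zeros to equal length): the sum of the $k$ largest eigenvalues of $\rho$ is at least that of $\sigma$ for every $k$. $|0\rangle$ is a unit vector in $\mathbb{C}^m$. The trace distance is $d(\omega,\omega')=\frac12\|\omega-\omega'\|_1$. *)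

theory Defs
  imports "Jordan_Normal_Form.Schur_Decomposition" "Jordan_Normal_Form.Char_Poly"
    "HOL-Library.Multiset"
begin

definition ket_bra :: "complex vec \<Rightarrow> complex vec \<Rightarrow> complex mat" where
  "ket_bra v w = mat (dim_vec v) (dim_vec w) (\<lambda>(i,j). v $ i * cnj (w $ j))"

definition hermitian_mat :: "complex mat \<Rightarrow> bool" where
  "hermitian_mat A \<longleftrightarrow> square_mat A \<and> mat_adjoint A = A"

definition psd_mat :: "complex mat \<Rightarrow> bool" where
  "psd_mat A \<longleftrightarrow> hermitian_mat A \<and>
     (\<forall>v \<in> carrier_vec (dim_row A). 0 \<le> Re ((A *\<^sub>v v) \<bullet>c v))"

definition mtrace :: "complex mat \<Rightarrow> complex" where
  "mtrace A = (\<Sum>i<dim_row A. A $$ (i,i))"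

definition density_mat :: "nat \<Rightarrow> complex mat \<Rightarrow> bool" where
  "density_mat n A \<longleftrightarrow> A \<in> carrier_mat n n \<and> psd_mat A \<and> mtrace A = 1"

definition orthonormal_basis :: "nat \<Rightarrow> (nat \<Rightarrow> complex vec) \<Rightarrow> bool" where
  "orthonormal_basis n e \<longleftrightarrow> (\<forall>i<n. e i \<in> carrier_vec n) \<and>
     (\<forall>i<n. \<forall>j<n. e i \<bullet>c e j = (if i = j then 1 else 0))"

definition diag_in :: "nat \<Rightarrow> (nat \<Rightarrow> complex vec) \<Rightarrow> (nat \<Rightarrow> real) \<Rightarrow> complex mat" where
  "diag_in n e w = mat n n (\<lambda>(i,j). \<Sum>k<n. complex_of_real (w k) * (e k $ i) * cnj (e k $ j))"

definition kron :: "complex mat \<Rightarrow> complex mat \<Rightarrow> complex mat" where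
  "kron A B = mat (dim_row A * dim_row B) (dim_col A * dim_col B)
     (\<lambda>(i,j). A $$ (i div dim_row B, j div dim_col B) * B $$ (i mod dim_row B, j mod dim_col B))"

definition eigvals :: "complex mat \<Rightarrow> complex multiset" where
  "eigvals A = (THE M. char_poly A = prod_mset (image_mset (\<lambda>a. [:- a, 1:]) M))"

definition sort_desc :: "real list \<Rightarrow> real list" where
  "sort_desc xs = rev (sort xs)"

definition majorizes :: "real list \<Rightarrow> real list \<Rightarrow> bool" where
  "majorizes xs ys \<longleftrightarrow>
    (let N = max (length xs) (length ys);
         xs' = sort_desc (xs @ replicate (N - length xs) 0);
         ys' = sort_desc (ys @ replicate (N - length ys) 0)
     in \<forall>k\<le>N. sum_list (take k ys') \<le> sum_list (take k xs'))"

definition eig_list :: "complex mat \<Rightarrow> real list" where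
  "eig_list A = sorted_list_of_multiset (image_mset Re (eigvals A))"

definition mat_succ :: "complex mat \<Rightarrow> complex mat \<Rightarrow> bool" where
  "mat_succ A B \<longleftrightarrow> majorizes (eig_list A) (eig_list B)"

definition trace_norm :: "complex mat \<Rightarrow> real" where
  "trace_norm X = sum_mset (image_mset (\<lambda>a. sqrt (Re a)) (eigvals (mat_adjoint X * X)))"

definition trace_dist :: "complex mat \<Rightarrow> complex mat \<Rightarrow> real" where
  "trace_dist A B = trace_norm (A - B) / 2"

end

theory Submission
  imports Defs
begin

(* Take for omega~ the pinching of omega' to the basis e, i.e. omega~_k = <e_k|omega'|e_k>
   = sum_i |<f_i|e_k>|^2 omega'_i.  As omega is diagonal in e, the diagonal of omega - omega' in
   that basis is (omega_k - omega~_k)_k, and pinching does not increase the trace norm, so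
   d(omega, omega~) <= d(omega, omega').  The overlap matrix |<f_i|e_k>|^2 is doubly stochastic,
   and so is its tensor product with the identity, which maps the spectrum of omega' (x) |0><0|
   onto that of omega~ (x) |0><0|.  Doubly stochastic images are majorized, and majorization is
   transitive. *)

lemma div_mod_less_mult:
  fixes i a c :: nat assumes "i < a * c" shows "i div c < a" "i mod c < c"
  using assms by (cases "c = 0"; auto simp: less_mult_imp_div_less)+

lemma sum_lessThan_mult: "(\<Sum>a<n*m. f a) = (\<Sum>i<n. \<Sum>j<m. f (i*m+j::nat))"
proof (induction n)
  case 0 then show ?case by simp
next
  case (Suc n)
  have "{..<Suc n * m} = {..<n*m} \<union> {n*m..<n*m+m}" by auto
  then have "(\<Sum>a<Suc n*m. f a) = (\<Sum>a<n*m. f a) + (\<Sum>a\<in>{n*m..<n*m+m}. f a)"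
    by (simp add: sum.union_disjoint ivl_disj_int)
  also have "(\<Sum>a\<in>{n*m..<n*m+m}. f a) = (\<Sum>j<m. f (n*m+j))"
    using sum.shift_bounds_nat_ivl[of f 0 "n*m" m]
    by (simp add: atLeast0LessThan add.commute)
  finally show ?case using Suc by simp
qed

lemma sum_lessThan_mult_div_mod:
  fixes m :: nat shows "(\<Sum>b<n*m. f (b div m) (b mod m)) = (\<Sum>i<n. \<Sum>j<m. f i j)"
  unfolding sum_lessThan_mult by (intro sum.cong refl) simp

lemma proots_prod_linear_factors: "proots (\<Prod>a\<in>#M. [:-a,1:]) = (M :: complex multiset)"
proof (induction M)
  case empty then show ?case by simp
next
  case (add x M)
  have nz: "(\<Prod>a\<in>#M. [:-a,1:]) \<noteq> (0::complex poly)"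
    by (auto simp: prod_mset_zero_iff)
  have "proots (\<Prod>a\<in>#add_mset x M. [:-a,1:]) = proots ([:-x,1:] * (\<Prod>a\<in>#M. [:-a,1:]))"
    by simp
  also have "\<dots> = proots [:-x,1:] + proots (\<Prod>a\<in>#M. [:-a,1:])"
    by (rule proots_mult) (use nz in auto)
  also have "\<dots> = add_mset x M" using add by simp
  finally show ?case .
qed

lemma eigvals_eqI: "char_poly A = (\<Prod>a\<in>#M. [:-a,1:]) \<Longrightarrow> eigvals A = M"
  unfolding eigvals_def
  by (rule the_equality) (auto dest: arg_cong[where f = proots] simp: proots_prod_linear_factors)

lemma eigvals_similar_upper_triangular:
  assumes "similar_mat A B" "B \<in> carrier_mat N N" "upper_triangular B"
  shows "eigvals A = mset (diag_mat B)"
proof (rule eigvals_eqI)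
  have "char_poly A = char_poly B" by (rule char_poly_similar[OF assms(1)])
  also have "\<dots> = (\<Prod>a\<leftarrow>diag_mat B. [:-a,1:])" by (rule char_poly_upper_triangular[OF assms(2,3)])
  finally show "char_poly A = (\<Prod>a\<in>#mset (diag_mat B). [:-a,1:])"
    by (simp add: prod_mset_prod_list[symmetric])
qed

abbreviation adj :: "complex mat \<Rightarrow> complex mat" where "adj \<equiv> mat_adjoint"

lemma adj_dims[simp]: "dim_row (adj A) = dim_col A" "dim_col (adj A) = dim_row A"
  by (auto simp: mat_adjoint_def mat_of_rows_def)

lemma adj_carrier[simp]: assumes "A \<in> carrier_mat r c" shows "adj A \<in> carrier_mat c r"
  using carrier_matD[OF assms] by (intro carrier_matI) simp_all

lemma adj_index[simp]: "i < dim_col A \<Longrightarrow> j < dim_row A \<Longrightarrow> adj A $$ (i,j) = cnj (A $$ (j,i))"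
  by (auto simp: mat_adjoint_def mat_of_rows_def)

lemma adj_adj[simp]: "adj (adj A) = A"
  by (rule eq_matI) auto

lemma adj_mult: assumes "A \<in> carrier_mat a b" "B \<in> carrier_mat b c"
  shows "adj (A * B) = adj B * adj A"
  by (rule eq_matI) (use assms in \<open>auto simp: scalar_prod_def cnj_sum mult.commute intro!: sum.cong\<close>)

lemma hermitian_index: assumes "adj A = A" "A \<in> carrier_mat n n" "i < n" "j < n"
  shows "A $$ (j,i) = cnj (A $$ (i,j))"
  using assms adj_index[of j A i] by simp

lemma assoc_mult_mat_dims:
  "dim_col A = dim_row B \<Longrightarrow> dim_col B = dim_row C \<Longrightarrow> A * B * C = A * (B * (C::'a::semiring_0 mat))"
  by (rule assoc_mult_mat[of A "dim_row A" "dim_col A" B "dim_col B" C "dim_col C"]) auto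

lemma mult_carrier_mat_square[simp]:
  "A \<in> carrier_mat n n \<Longrightarrow> B \<in> carrier_mat n n \<Longrightarrow> A * B \<in> carrier_mat n n"
  by (rule mult_carrier_mat)

lemma trace_mult_comm: fixes X Y :: "complex mat"
  assumes X: "X \<in> carrier_mat n m" and Y: "Y \<in> carrier_mat m n"
  shows "(\<Sum>a<n. (X * Y) $$ (a,a)) = (\<Sum>k<m. (Y * X) $$ (k,k))"
proof -
  have "(\<Sum>a<n. (X * Y) $$ (a,a)) = (\<Sum>a<n. \<Sum>k<m. X $$ (a,k) * Y $$ (k,a))"
    using X Y by (simp add: scalar_prod_def atLeast0LessThan)
  also have "\<dots> = (\<Sum>k<m. \<Sum>a<n. Y $$ (k,a) * X $$ (a,k))"
    by (subst sum.swap) (simp add: mult.commute[of "X $$ _"])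
  also have "\<dots> = (\<Sum>k<m. (Y * X) $$ (k,k))"
    using X Y by (simp add: scalar_prod_def atLeast0LessThan)
  finally show ?thesis .
qed

section \<open>Unitary conjugates of diagonal matrices\<close>

lemma mat_diag_dims[simp]: "dim_row (mat_diag n d) = n" "dim_col (mat_diag n d) = n"
  by (auto simp: mat_diag_def)

lemma mat_diag_index[simp]: "i < n \<Longrightarrow> j < n \<Longrightarrow> mat_diag n d $$ (i,j) = (if i = j then d i else 0)"
  by (auto simp: mat_diag_def)

lemma adj_mat_diag: "adj (mat_diag n d) = mat_diag n (\<lambda>i. cnj (d i))"
  by (rule eq_matI) auto

lemma upper_triangular_mat_diag: "upper_triangular (mat_diag n d)"
  by (auto simp: upper_triangular_def)

lemma diag_mat_mat_diag: "diag_mat (mat_diag n d) = map d [0..<n]"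
  by (auto simp: diag_mat_def intro!: nth_equalityI)

lemma conj_mat_diag_index: assumes "U \<in> carrier_mat n k" "i < n" "j < n"
  shows "(U * mat_diag k d * adj U) $$ (i,j) = (\<Sum>l<k. U $$ (i,l) * d l * cnj (U $$ (j,l)))"
  using assms by (simp add: mat_diag_mult_right[OF assms(1)] scalar_prod_def atLeast0LessThan)

lemma mult_cnj_eq_cmod_sq: "z * cnj z = complex_of_real ((cmod z)\<^sup>2)" "cnj z * z = complex_of_real ((cmod z)\<^sup>2)"
  by (metis complex_norm_square mult.commute)+

lemma conj_mat_diag_real_index: assumes "G \<in> carrier_mat n k" "i < n"
  shows "(G * mat_diag k (\<lambda>l. complex_of_real (r l)) * adj G) $$ (i,i)
     = complex_of_real (\<Sum>l<k. r l * (cmod (G $$ (i,l)))\<^sup>2)"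
proof -
  have "G $$ (i,l) * complex_of_real (r l) * cnj (G $$ (i,l))
      = complex_of_real (r l * (cmod (G $$ (i,l)))\<^sup>2)" for l
    by (simp add: mult.commute mult.left_commute mult_cnj_eq_cmod_sq)
  then show ?thesis by (simp only: conj_mat_diag_index[OF assms assms(2)] of_real_sum)
qed

definition unitary :: "nat \<Rightarrow> complex mat \<Rightarrow> bool" where
  "unitary n U \<longleftrightarrow> U \<in> carrier_mat n n \<and> adj U * U = 1\<^sub>m n"

lemma unitaryD: assumes "unitary n U"
  shows "U \<in> carrier_mat n n" "adj U \<in> carrier_mat n n" "adj U * U = 1\<^sub>m n" "U * adj U = 1\<^sub>m n"
  using assms mat_mult_left_right_inverse[of "adj U" n U] by (auto simp: unitary_def)

lemma unitary_adj: assumes "unitary n U" shows "unitary n (adj U)"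
  unfolding unitary_def using unitaryD[OF assms] by simp

lemma unitary_cancel: assumes "unitary n U" "X \<in> carrier_mat n k"
  shows "adj U * (U * X) = X" "U * (adj U * X) = X"
proof -
  note u = unitaryD[OF assms(1)]
  have "adj U * (U * X) = (adj U * U) * X" "U * (adj U * X) = (U * adj U) * X"
    using u assms(2) by (metis assoc_mult_mat)+
  then show "adj U * (U * X) = X" "U * (adj U * X) = X" using u assms(2) by simp_all
qed

lemma unitary_mult: assumes "unitary n U" "unitary n V" shows "unitary n (U * V)"
proof -
  note u = unitaryD[OF assms(1)] and v = unitaryD[OF assms(2)]
  have "adj (U * V) * (U * V) = adj V * (adj U * (U * V))"
    using u v by (simp add: adj_mult[of _ n n] assoc_mult_mat_dims)
  also have "\<dots> = 1\<^sub>m n" using unitary_cancel(1)[OF assms(1) v(1)] v by simp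
  finally show ?thesis using u v unfolding unitary_def by auto
qed

lemma unitary_col_norms: assumes "unitary n G" "i < n"
  shows "(\<Sum>k<n. (cmod (G $$ (k,i)))\<^sup>2) = 1"
proof -
  note g = unitaryD[OF assms(1)]
  have "complex_of_real (\<Sum>k<n. (cmod (G $$ (k,i)))\<^sup>2) = (adj G * G) $$ (i,i)"
    using g(1) assms(2) by (simp add: scalar_prod_def atLeast0LessThan of_real_sum mult_cnj_eq_cmod_sq)
  also have "\<dots> = 1" using g assms(2) by simp
  finally show ?thesis by (simp only: of_real_eq_1_iff)
qed

lemma unitary_row_norms: assumes "unitary n G" "k < n"
  shows "(\<Sum>i<n. (cmod (G $$ (k,i)))\<^sup>2) = 1"
  using unitary_col_norms[OF unitary_adj[OF assms(1)] assms(2)] unitaryD(1)[OF assms(1)] assms(2)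
  by simp

lemma conj_mat_diag_adj: assumes "unitary n U"
  shows "adj (U * mat_diag n c * adj U) = U * mat_diag n (\<lambda>i. cnj (c i)) * adj U"
proof -
  note u = unitaryD[OF assms]
  have "adj (U * mat_diag n c * adj U) = adj (adj U) * adj (U * mat_diag n c)"
    by (rule adj_mult) (use u in auto)
  also have "adj (U * mat_diag n c) = adj (mat_diag n c) * adj U" by (rule adj_mult) (use u in auto)
  finally show ?thesis using u by (simp add: adj_mat_diag assoc_mult_mat_dims)
qed

lemma conj_mat_diag_mult: assumes "unitary n U"
  shows "(U * mat_diag n a * adj U) * (U * mat_diag n b * adj U) = U * mat_diag n (\<lambda>i. a i * b i) * adj U"
proof -
  note u = unitaryD[OF assms]
  have "(U * mat_diag n a * adj U) * (U * mat_diag n b * adj U)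
      = U * mat_diag n a * (adj U * (U * (mat_diag n b * adj U)))"
    using u by (simp add: assoc_mult_mat_dims)
  also have "\<dots> = U * mat_diag n a * (mat_diag n b * adj U)"
    using unitary_cancel(1)[OF assms mult_carrier_mat[OF mat_diag_dim u(2)]] by simp
  moreover have "mat_diag n a * (mat_diag n b * adj U) = (mat_diag n a * mat_diag n b) * adj U"
    by (rule assoc_mult_mat[symmetric]) (use u in auto)
  ultimately show ?thesis using u by (simp add: assoc_mult_mat_dims)
qed

lemma conj_conj_mat_diag: assumes "unitary n U" "unitary n E"
  shows "adj E * (U * mat_diag n c * adj U) * E = (adj E * U) * mat_diag n c * adj (adj E * U)"
  using unitaryD[OF assms(1)] unitaryD[OF assms(2)] by (simp add: adj_mult[of _ n n] assoc_mult_mat_dims)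

lemma eigvals_conj_mat_diag: assumes "unitary n U"
  shows "eigvals (U * mat_diag n d * adj U) = mset (map d [0..<n])"
proof -
  note u = unitaryD[OF assms]
  have "similar_mat (U * mat_diag n d * adj U) (mat_diag n d)"
    by (rule similar_matI[where n=n]) (use u in auto)
  from eigvals_similar_upper_triangular[OF this mat_diag_dim upper_triangular_mat_diag]
  show ?thesis by (simp add: diag_mat_mat_diag)
qed

lemma trace_norm_conj_mat_diag: assumes "unitary n U"
  shows "trace_norm (U * mat_diag n c * adj U) = (\<Sum>i<n. cmod (c i))"
proof -
  have sq: "adj (U * mat_diag n c * adj U) * (U * mat_diag n c * adj U) = U * mat_diag n (\<lambda>i. cnj (c i) * c i) * adj U"
    using conj_mat_diag_adj[OF assms] conj_mat_diag_mult[OF assms] by simp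
  have "trace_norm (U * mat_diag n c * adj U) = (\<Sum>i\<leftarrow>[0..<n]. sqrt (Re (cnj (c i) * c i)))"
    unfolding trace_norm_def sq eigvals_conj_mat_diag[OF assms]
    by (simp only: mset_map[symmetric] sum_mset_sum_list map_map o_def)
  also have "\<dots> = (\<Sum>i<n. cmod (c i))"
    by (simp add: sum_set_upt_conv_sum_list_nat[symmetric] atLeast0LessThan[symmetric] mult_cnj_eq_cmod_sq)
  finally show ?thesis .
qed

lemma pinching_diag_le_trace_norm:
  assumes "unitary n U" "unitary n E"
  shows "(\<Sum>k<n. cmod ((adj E * (U * mat_diag n (\<lambda>i. complex_of_real (r i)) * adj U) * E) $$ (k,k)))
         \<le> (\<Sum>i<n. \<bar>r i\<bar>)"
proof -
  define G where "G = adj E * U"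
  have uG: "unitary n G" unfolding G_def using unitary_mult[OF unitary_adj[OF assms(2)] assms(1)] .
  have "(\<Sum>k<n. cmod ((adj E * (U * mat_diag n (\<lambda>i. complex_of_real (r i)) * adj U) * E) $$ (k,k)))
      = (\<Sum>k<n. \<bar>\<Sum>i<n. r i * (cmod (G $$ (k,i)))\<^sup>2\<bar>)"
    unfolding conj_conj_mat_diag[OF assms, folded G_def]
    using conj_mat_diag_real_index[OF unitaryD(1)[OF uG]] by (intro sum.cong) (simp_all only: lessThan_iff norm_of_real)
  also have "\<dots> \<le> (\<Sum>k<n. \<Sum>i<n. \<bar>r i\<bar> * (cmod (G $$ (k,i)))\<^sup>2)"
    by (rule sum_mono) (rule order_trans[OF sum_abs], simp add: abs_mult)
  also have "\<dots> = (\<Sum>i<n. \<bar>r i\<bar> * (\<Sum>k<n. (cmod (G $$ (k,i)))\<^sup>2))"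
    by (subst sum.swap) (simp add: sum_distrib_left)
  also have "\<dots> = (\<Sum>i<n. \<bar>r i\<bar>)" using unitary_col_norms[OF uG] by simp
  finally show ?thesis .
qed

section \<open>The spectral theorem for Hermitian matrices\<close>

lemma cscalar_prod_self_eq_Re:
  fixes w :: "complex vec" shows "w \<bullet>c w = complex_of_real (Re (w \<bullet>c w))" "0 \<le> Re (w \<bullet>c w)"
  using conjugate_square_ge_0_vec[of w] by (auto simp: less_eq_complex_def complex_eq_iff)

lemma unitary_with_first_column:
  assumes v: "v \<in> carrier_vec k" and v0: "v \<noteq> 0\<^sub>v k"
  shows "\<exists>W c. unitary k W \<and> (\<forall>a<k. W $$ (a,0) = c * v $ a)"
proof -
  interpret cof_vec_space k "TYPE(complex)" .
  define b where "b = basis_completion v"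
  note bc = basis_completion[OF v v0, folded b_def]
  have k0: "k \<noteq> 0" using v v0 by auto
  then obtain vs where bv: "b = v # vs" using bc(6,7) by (cases b) auto
  define ws where "ws = gram_schmidt k b"
  note gs = gram_schmidt_result[OF bc(2) bc(4) bc(5) ws_def]
  have lws: "length ws = k" using gs(4) bc(6) by simp
  have ws0: "ws ! 0 = v"
    using gram_schmidt_hd[OF v, of vs] lws k0 unfolding ws_def bv by (cases "gram_schmidt k (v # vs)") auto
  have wsc: "ws ! i \<in> carrier_vec k" if "i < k" for i using gs(3) lws that by auto
  have nz: "ws ! i \<bullet>c ws ! i \<noteq> 0" if "i < k" for i using gs(2) lws that by (auto simp: corthogonal_def)
  have orth: "ws ! i \<bullet>c ws ! j = 0" if "i < k" "j < k" "i \<noteq> j" for i j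
    using gs(2) lws that by (auto simp: corthogonal_def)
  define nr where "nr i = complex_of_real (sqrt (Re (ws ! i \<bullet>c ws ! i)))" for i
  have nrsq: "nr i * nr i = ws ! i \<bullet>c ws ! i" for i
    using cscalar_prod_self_eq_Re[of "ws ! i"] by (simp add: nr_def flip: of_real_mult)
  define W where "W = mat k k (\<lambda>(a,i). ws ! i $ a / nr i)"
  have Wc: "W \<in> carrier_mat k k" by (simp add: W_def)
  have "adj W * W = 1\<^sub>m k"
  proof (rule eq_matI)
    fix i j assume "i < dim_row (1\<^sub>m k)" "j < dim_col (1\<^sub>m k)"
    then have i: "i < k" and j: "j < k" by auto
    have "(adj W * W) $$ (i,j) = (\<Sum>a<k. cnj (ws ! i $ a) * ws ! j $ a) / (cnj (nr i) * nr j)"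
      using i j by (simp add: W_def scalar_prod_def atLeast0LessThan sum_divide_distrib)
    also have "(\<Sum>a<k. cnj (ws ! i $ a) * ws ! j $ a) = ws ! j \<bullet>c ws ! i"
      using wsc[OF i] wsc[OF j] by (simp add: scalar_prod_def atLeast0LessThan mult.commute)
    also have "cnj (nr i) = nr i" by (simp add: nr_def)
    finally show "(adj W * W) $$ (i,j) = 1\<^sub>m k $$ (i,j)"
      using nrsq[of i] nz[OF i] orth[OF j i] i j by (cases "i = j") simp_all
  qed (use Wc in auto)
  then show ?thesis
    using Wc k0 ws0 by (intro exI[of _ W] exI[of _ "1 / nr 0"]) (simp add: unitary_def W_def)
qed

lemma hermitian_conj: assumes "A \<in> carrier_mat n n" "adj A = A" "W \<in> carrier_mat n n"
  shows "adj (adj W * A * W) = adj W * A * W"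
proof -
  have "adj (adj W * A * W) = adj W * adj (adj W * A)" by (rule adj_mult) (use assms in auto)
  also have "adj (adj W * A) = adj A * W" by (subst adj_mult) (use assms in auto)
  finally show ?thesis using assms by (simp add: assoc_mult_mat_dims)
qed

text \<open>One step of the induction: conjugating by a unitary whose first column is an eigenvector
  splits off a $1 \times 1$ block, whose entry is real by hermiticity.\<close>

lemma hermitian_deflate:
  assumes A: "A \<in> carrier_mat (Suc n) (Suc n)" and herm: "adj A = A"
  shows "\<exists>W ev. unitary (Suc n) W \<and>
     (\<forall>i<Suc n. (adj W * A * W) $$ (i,0) = (if i = 0 then complex_of_real ev else 0)
              \<and> (adj W * A * W) $$ (0,i) = (if i = 0 then complex_of_real ev else 0))"
proof -
  obtain as where cp: "char_poly A = (\<Prod>a\<leftarrow>as. [:- a, 1:])" and len: "length as = Suc n"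
    using char_poly_factorized[OF A] by blast
  then obtain \<mu> rest where as: "as = \<mu> # rest" by (cases as) auto
  have "eigenvalue A \<mu>" using eigenvalue_root_char_poly[OF A] by (simp add: cp as)
  from find_eigenvector[OF A this] obtain v where "eigenvector A v \<mu>" by blast
  then have v: "v \<in> carrier_vec (Suc n)" and v0: "v \<noteq> 0\<^sub>v (Suc n)" and Av: "A *\<^sub>v v = \<mu> \<cdot>\<^sub>v v"
    using A by (auto simp: eigenvector_def)
  obtain W c where uW: "unitary (Suc n) W" and W0: "\<And>a. a < Suc n \<Longrightarrow> W $$ (a,0) = c * v $ a"
    using unitary_with_first_column[OF v v0] by blast
  note w = unitaryD[OF uW]
  define A' where "A' = adj W * A * W"
  have A'c: "A' \<in> carrier_mat (Suc n) (Suc n)" using A w by (simp add: A'_def)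
  have herm': "adj A' = A'" unfolding A'_def by (rule hermitian_conj[OF A herm w(1)])
  have AW0: "(A * W) $$ (a,0) = \<mu> * W $$ (a,0)" if a: "a < Suc n" for a
  proof -
    have "(A * W) $$ (a,0) = c * (A *\<^sub>v v) $ a"
      using A w a W0 v by (simp add: scalar_prod_def atLeast0LessThan sum_distrib_left algebra_simps)
    then show ?thesis using Av v a W0 by simp
  qed
  have col0: "A' $$ (i,0) = (if i = 0 then \<mu> else 0)" if i: "i < Suc n" for i
  proof -
    have "A' $$ (i,0) = (\<Sum>k<Suc n. adj W $$ (i,k) * (\<mu> * W $$ (k,0)))"
      unfolding A'_def using A w i AW0 by (simp add: assoc_mult_mat_dims scalar_prod_def atLeast0LessThan)
    also have "\<dots> = \<mu> * (adj W * W) $$ (i,0)"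
      using w(1) i by (simp add: scalar_prod_def atLeast0LessThan sum_distrib_left algebra_simps)
    finally show ?thesis using w i by simp
  qed
  have real: "\<mu> = complex_of_real (Re \<mu>)"
    using hermitian_index[OF herm' A'c, of 0 0] col0[of 0] by (simp add: complex_eq_iff)
  have row0: "A' $$ (0,j) = (if j = 0 then \<mu> else 0)" if j: "j < Suc n" for j
    using hermitian_index[OF herm' A'c, of j 0] col0[OF j] j real by (metis complex_cnj_complex_of_real complex_cnj_zero zero_less_Suc)
  show ?thesis using uW col0 row0 real unfolding A'_def by (intro exI[of _ W] exI[of _ "Re \<mu>"]) auto
qed

definition one_block_diag :: "nat \<Rightarrow> complex mat \<Rightarrow> complex mat" where
  "one_block_diag n U = mat (Suc n) (Suc n) (\<lambda>(i,j). if i = 0 then (if j = 0 then 1 else 0)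
      else if j = 0 then 0 else U $$ (i - 1, j - 1))"

lemma one_block_diag_carrier[simp]: "one_block_diag n U \<in> carrier_mat (Suc n) (Suc n)"
  and one_block_diag_dims[simp]: "dim_row (one_block_diag n U) = Suc n" "dim_col (one_block_diag n U) = Suc n"
  by (simp_all add: one_block_diag_def)

lemma unitary_one_block_diag: assumes u: "unitary n U" shows "unitary (Suc n) (one_block_diag n U)"
proof -
  define V where "V = one_block_diag n U"
  note u' = unitaryD[OF u]
  have "adj V * V = 1\<^sub>m (Suc n)"
  proof (rule eq_matI)
    fix i j assume "i < dim_row (1\<^sub>m (Suc n))" "j < dim_col (1\<^sub>m (Suc n))"
    then have i: "i < Suc n" and j: "j < Suc n" by auto
    have "(adj V * V) $$ (i,j) = (\<Sum>k<Suc n. cnj (V $$ (k,i)) * V $$ (k,j))"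
      using i j by (simp add: V_def scalar_prod_def atLeast0LessThan)
    also have "\<dots> = cnj (V $$ (0,i)) * V $$ (0,j) + (\<Sum>k<n. cnj (V $$ (Suc k,i)) * V $$ (Suc k,j))"
      by (rule sum.lessThan_Suc_shift)
    finally have "(adj V * V) $$ (i,j) = \<dots>" .
    moreover have "(\<Sum>k<n. cnj (V $$ (Suc k,Suc i')) * V $$ (Suc k,Suc j')) = (adj U * U) $$ (i',j')"
      if "i' < n" "j' < n" for i' j'
      using that u'(1) by (simp add: V_def one_block_diag_def scalar_prod_def atLeast0LessThan)
    ultimately show "(adj V * V) $$ (i,j) = 1\<^sub>m (Suc n) $$ (i,j)"
      using i j u' by (cases i; cases j) (auto simp: V_def one_block_diag_def)
  qed (auto simp: V_def)
  then show ?thesis by (simp add: unitary_def V_def)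
qed

lemma one_block_diag_conj:
  assumes B: "B \<in> carrier_mat (Suc n) (Suc n)" and U: "U \<in> carrier_mat n n"
    and border: "\<And>i. i < Suc n \<Longrightarrow> B $$ (i,0) = (if i = 0 then complex_of_real ev else 0)
                                  \<and> B $$ (0,i) = (if i = 0 then complex_of_real ev else 0)"
    and corner: "mat n n (\<lambda>(i,j). B $$ (Suc i, Suc j)) = U * mat_diag n (\<lambda>i. complex_of_real (d i)) * adj U"
  shows "B = one_block_diag n U * mat_diag (Suc n) (\<lambda>i. complex_of_real (if i = 0 then ev else d (i - 1)))
             * adj (one_block_diag n U)"
    (is "B = ?V * mat_diag (Suc n) ?d * adj ?V")
proof (rule eq_matI)
  fix i j assume "i < dim_row (?V * mat_diag (Suc n) ?d * adj ?V)" "j < dim_col (?V * mat_diag (Suc n) ?d * adj ?V)"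
  then have i: "i < Suc n" and j: "j < Suc n" by auto
  have e1: "(?V * mat_diag (Suc n) ?d * adj ?V) $$ (i,j)
       = ?V $$ (i,0) * ?d 0 * cnj (?V $$ (j,0)) + (\<Sum>l<n. ?V $$ (i,Suc l) * ?d (Suc l) * cnj (?V $$ (j,Suc l)))"
    by (simp only: conj_mat_diag_index[OF one_block_diag_carrier i j] sum.lessThan_Suc_shift)
  have "(\<Sum>l<n. ?V $$ (Suc i',Suc l) * ?d (Suc l) * cnj (?V $$ (Suc j',Suc l))) = B $$ (Suc i', Suc j')"
    if "i' < n" "j' < n" for i' j'
    using that conj_mat_diag_index[OF U that, of "\<lambda>i. complex_of_real (d i)"] arg_cong[OF corner, of "\<lambda>X. X $$ (i',j')"]
    by (simp add: one_block_diag_def del: index_mult_mat)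
  then show "B $$ (i,j) = (?V * mat_diag (Suc n) ?d * adj ?V) $$ (i,j)"
    using e1 i j border[OF i] border[OF j] by (cases i; cases j) (auto simp: one_block_diag_def)
qed (use B in auto)

lemma hermitian_spectral:
  "A \<in> carrier_mat n n \<Longrightarrow> adj A = A \<Longrightarrow>
     \<exists>U d. unitary n U \<and> A = U * mat_diag n (\<lambda>i. complex_of_real (d i)) * adj U"
proof (induction n arbitrary: A)
  case 0
  then show ?case
    by (intro exI[of _ "1\<^sub>m 0"] exI[of _ "\<lambda>_. 0"]) (auto simp: unitary_def intro!: eq_matI)
next
  case (Suc n)
  obtain W ev where uW: "unitary (Suc n) W" and border:
    "\<And>i. i < Suc n \<Longrightarrow> (adj W * A * W) $$ (i,0) = (if i = 0 then complex_of_real ev else 0)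
                     \<and> (adj W * A * W) $$ (0,i) = (if i = 0 then complex_of_real ev else 0)"
    using hermitian_deflate[OF Suc.prems] by blast
  note w = unitaryD[OF uW]
  define A' where "A' = adj W * A * W"
  have A'c: "A' \<in> carrier_mat (Suc n) (Suc n)" using Suc.prems w by (simp add: A'_def)
  have herm': "adj A' = A'" unfolding A'_def using hermitian_conj[OF Suc.prems w(1)] .
  define A3 where "A3 = mat n n (\<lambda>(i,j). A' $$ (Suc i, Suc j))"
  have "adj A3 = A3"
  proof (rule eq_matI)
    fix i j assume "i < dim_row A3" "j < dim_col A3"
    then show "adj A3 $$ (i,j) = A3 $$ (i,j)"
      using hermitian_index[OF herm' A'c, of "Suc j" "Suc i"] by (simp add: A3_def)
  qed (auto simp: A3_def)
  then obtain U3 d3 where u3: "unitary n U3" and A3: "A3 = U3 * mat_diag n (\<lambda>i. complex_of_real (d3 i)) * adj U3"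
    using Suc.IH[of A3] by (auto simp: A3_def)
  define V where "V = one_block_diag n U3"
  define D where "D = mat_diag (Suc n) (\<lambda>i. complex_of_real (if i = 0 then ev else d3 (i - 1)))"
  have A'V: "A' = V * D * adj V"
    unfolding V_def D_def
    by (rule one_block_diag_conj[OF A'c unitaryD(1)[OF u3] border[folded A'_def] A3[unfolded A3_def]])
  note v = unitaryD[OF unitary_one_block_diag[OF u3, folded V_def]]
  have WA': "W * A' = A * W"
    unfolding A'_def using unitary_cancel(2)[OF uW, of "A * W" "Suc n"] Suc.prems(1) w
    by (simp add: assoc_mult_mat_dims)
  have "A = A * W * adj W" using Suc.prems(1) w by (simp add: assoc_mult_mat_dims)
  also have "\<dots> = W * (V * D * adj V) * adj W" by (simp only: WA'[symmetric] A'V)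
  also have "\<dots> = (W * V) * D * adj (W * V)"
    using w v by (simp add: D_def adj_mult[of W "Suc n" "Suc n" V "Suc n"] assoc_mult_mat_dims)
  finally have "A = (W * V) * D * adj (W * V)" .
  moreover have "unitary (Suc n) (W * V)" unfolding V_def by (rule unitary_mult[OF uW unitary_one_block_diag[OF u3]])
  ultimately show ?case
    by (intro exI[of _ "W * V"] exI[of _ "\<lambda>i. if i = 0 then ev else d3 (i - 1)"]) (simp add: D_def)
qed

section \<open>Spectra of Kronecker products\<close>

lemma kron_dims[simp]:
  "dim_row (kron A B) = dim_row A * dim_row B" "dim_col (kron A B) = dim_col A * dim_col B"
  by (auto simp: kron_def)

lemma kron_carrier[simp]: assumes "A \<in> carrier_mat a b" "B \<in> carrier_mat c d"
  shows "kron A B \<in> carrier_mat (a*c) (b*d)"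
  using carrier_matD[OF assms(1)] carrier_matD[OF assms(2)] by (intro carrier_matI) simp_all

lemma kron_index[simp]: "i < dim_row A * dim_row B \<Longrightarrow> j < dim_col A * dim_col B \<Longrightarrow>
   kron A B $$ (i,j) = A $$ (i div dim_row B, j div dim_col B) * B $$ (i mod dim_row B, j mod dim_col B)"
  by (auto simp: kron_def)

lemma kron_mult:
  assumes A: "A \<in> carrier_mat a b" and B: "B \<in> carrier_mat c d"
    and C: "C \<in> carrier_mat b e" and D: "D \<in> carrier_mat d g"
  shows "kron A B * kron C D = kron (A * C) (B * D)"
proof (rule eq_matI)
  fix i j assume "i < dim_row (kron (A * C) (B * D))" "j < dim_col (kron (A * C) (B * D))"
  then have i: "i < a * c" and j: "j < e * g" using assms by auto
  note ic = div_mod_less_mult[OF i] and jg = div_mod_less_mult[OF j]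
  have "(kron A B * kron C D) $$ (i,j) = (\<Sum>t<b*d. A $$ (i div c, t div d) * B $$ (i mod c, t mod d) *
          (C $$ (t div d, j div g) * D $$ (t mod d, j mod g)))"
    using assms i j by (auto simp: scalar_prod_def atLeast0LessThan intro!: sum.cong)
  also have "\<dots> = (\<Sum>p<b. \<Sum>q<d. A $$ (i div c, p) * B $$ (i mod c, q) *
          (C $$ (p, j div g) * D $$ (q, j mod g)))"
    by (rule sum_lessThan_mult_div_mod)
  also have "\<dots> = (\<Sum>p<b. A $$ (i div c, p) * C $$ (p, j div g)) * (\<Sum>q<d. B $$ (i mod c, q) * D $$ (q, j mod g))"
    by (simp add: sum_product algebra_simps)
  also have "\<dots> = kron (A * C) (B * D) $$ (i,j)"
    using assms i j ic jg by (simp add: scalar_prod_def atLeast0LessThan)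
  finally show "(kron A B * kron C D) $$ (i,j) = kron (A * C) (B * D) $$ (i,j)" .
qed (use assms in auto)

lemma kron_one: "kron (1\<^sub>m a) (1\<^sub>m c) = 1\<^sub>m (a * c)"
proof (rule eq_matI)
  fix i j assume "i < dim_row (1\<^sub>m (a * c))" "j < dim_col (1\<^sub>m (a * c))"
  then have i: "i < a * c" and j: "j < a * c" by auto
  have "i = j \<longleftrightarrow> i div c = j div c \<and> i mod c = j mod c" by (metis div_mult_mod_eq)
  then show "kron (1\<^sub>m a) (1\<^sub>m c) $$ (i, j) = 1\<^sub>m (a * c) $$ (i, j)"
    using i j div_mod_less_mult[OF i] div_mod_less_mult[OF j] by auto
qed auto

lemma upper_triangular_kron_mat_diag:
  assumes T: "T \<in> carrier_mat m m" "upper_triangular T"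
  shows "upper_triangular (kron (mat_diag n d) T)"
  unfolding upper_triangular_def
proof (intro allI impI)
  fix i j assume "i < dim_row (kron (mat_diag n d) T)" and ji: "j < i"
  then have i: "i < n * m" and j: "j < n * m" using T by auto
  note ic = div_mod_less_mult[OF i] and jc = div_mod_less_mult[OF j]
  have "j mod m < i mod m" if "i div m = j div m"
  proof -
    have "i div m * m = j div m * m" using that by simp
    then show ?thesis using ji div_mult_mod_eq[of i m] div_mult_mod_eq[of j m] by linarith
  qed
  then show "kron (mat_diag n d) T $$ (i, j) = 0"
    using T i j ic jc by (auto simp: upper_triangular_def)
qed

lemma diag_mat_kron_mat_diag: assumes "T \<in> carrier_mat m m"
  shows "diag_mat (kron (mat_diag n d) T) = map (\<lambda>a. d (a div m) * T $$ (a mod m, a mod m)) [0..<n*m]"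
  using assms by (auto simp: diag_mat_def less_mult_imp_div_less intro!: nth_equalityI)

lemma similar_mat_kron_conj:
  assumes u: "unitary n U" and D: "D \<in> carrier_mat n n"
    and M: "M \<in> carrier_mat m m" and sw: "similar_mat_wit M T P Q"
  shows "similar_mat (kron (U * D * adj U) M) (kron D T)"
proof -
  note uu = unitaryD[OF u] and s = similar_mat_witD2[OF M sw]
  note kron_mult' = kron_mult[of _ n n _ m m _ n _ m]
  have "kron U P * kron (adj U) Q = 1\<^sub>m (n*m)" "kron (adj U) Q * kron U P = 1\<^sub>m (n*m)"
    using uu s by (simp_all add: kron_mult' kron_one)
  moreover have "kron U P * kron D T * kron (adj U) Q = kron (U * D) (P * T) * kron (adj U) Q"
    using uu s D by (simp add: kron_mult')
  moreover have "\<dots> = kron (U * D * adj U) M"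
    using uu s D by (simp add: kron_mult')
  ultimately show ?thesis
    by (intro similar_matI[where n="n*m" and P="kron U P" and Q="kron (adj U) Q"]) (use uu s D M in \<open>auto simp: assoc_mult_mat_dims\<close>)
qed

text \<open>The eigenvalues of $M$ are read off a Schur form $T$ of $M$; tensoring with $T$ keeps
  $\mathrm{diag}(d) \otimes T$ upper triangular.\<close>

lemma eigvals_kron_conj_mat_diag: assumes M: "M \<in> carrier_mat m m"
  shows "\<exists>\<mu>. \<forall>n U d. unitary n U \<longrightarrow>
     eigvals (kron (U * mat_diag n d * adj U) M) = mset (map (\<lambda>a. d (a div m) * \<mu> (a mod m)) [0..<n*m])"
proof -
  obtain es where es: "char_poly M = (\<Prod>a\<leftarrow>es. [:- a, 1:])" using char_poly_factorized[OF M] by blast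
  obtain T P Q where sd: "schur_decomposition M es = (T,P,Q)" by (cases "schur_decomposition M es") auto
  from schur_decomposition[OF M es sd] have sw: "similar_mat_wit M T P Q" and ut: "upper_triangular T" by auto
  have T: "T \<in> carrier_mat m m" using similar_mat_witD2[OF M sw] by auto
  have "eigvals (kron (U * mat_diag n d * adj U) M) = mset (map (\<lambda>a. d (a div m) * T $$ (a mod m, a mod m)) [0..<n*m])"
    if u: "unitary n U" for n U d
    using eigvals_similar_upper_triangular[OF similar_mat_kron_conj[OF u mat_diag_dim M sw] _
        upper_triangular_kron_mat_diag[OF T ut], where N = "n*m"] T
    by (simp add: diag_mat_kron_mat_diag[OF T])
  then show ?thesis by (intro exI[of _ "\<lambda>j. T $$ (j,j)"]) blast
qed

section \<open>Majorization and doubly stochastic matrices\<close>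

definition sum_largest :: "nat \<Rightarrow> real list \<Rightarrow> real" where
  "sum_largest k ys = sum_list (take k (sort_desc ys))"

lemma sum_largest_mset_cong: "mset ys = mset ys' \<Longrightarrow> sum_largest k ys = sum_largest k ys'"
  using properties_for_sort[of "sort ys'" ys] by (simp add: sum_largest_def sort_desc_def)

lemma majorizes_mono_right:
  assumes "majorizes xs ys" "length ys = length xs" "length ys' = length xs"
    and "\<forall>k\<le>length xs. sum_largest k ys' \<le> sum_largest k ys"
  shows "majorizes xs ys'"
  using assms unfolding majorizes_def sum_largest_def Let_def by (fastforce intro: order_trans)

lemma sum_largest_attained:
  fixes g :: "nat \<Rightarrow> real" assumes k: "k \<le> N"
  shows "\<exists>S. S \<subseteq> {..<N} \<and> card S = k \<and> sum_largest k (map g [0..<N]) = (\<Sum>a\<in>S. g a)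
     \<and> (\<forall>a\<in>S. \<forall>b\<in>{..<N}-S. g b \<le> g a)"
proof -
  define xs where "xs = sort_key (\<lambda>i. - g i) [0..<N]"
  have mx: "mset xs = mset [0..<N]" by (simp add: xs_def)
  have sx: "set xs = {..<N}" by (simp add: xs_def atLeast0LessThan)
  have dx: "distinct xs" by (simp add: xs_def)
  have lx: "length xs = N" by (simp add: xs_def)
  have "sorted (map (\<lambda>i. - g i) xs)" by (simp add: xs_def)
  then have sw: "sorted_wrt (\<lambda>a b. g b \<le> g a) xs" by (simp add: sorted_map)
  have "sort (map g [0..<N]) = rev (map g xs)"
  proof (rule properties_for_sort)
    show "mset (rev (map g xs)) = mset (map g [0..<N])" using mx by (simp del: mset_upt)
    show "sorted (rev (map g xs))" using sw by (simp add: sorted_wrt_rev sorted_wrt_map)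
  qed
  then have sd: "sort_desc (map g [0..<N]) = map g xs" by (simp add: sort_desc_def)
  define S where "S = set (take k xs)"
  have "sum_largest k (map g [0..<N]) = (\<Sum>a\<in>S. g a)"
    unfolding sum_largest_def sd take_map S_def by (rule sum_list_distinct_conv_sum_set) (simp add: dx)
  moreover have "card S = k" unfolding S_def using dx lx k by (simp add: distinct_card)
  moreover have "S \<subseteq> {..<N}" unfolding S_def using sx set_take_subset by metis
  moreover have "g b \<le> g a" if a: "a \<in> S" and b: "b \<in> {..<N} - S" for a b
  proof -
    have "set xs = set (take k xs) \<union> set (drop k xs)" by (metis append_take_drop_id set_append)
    then have b': "b \<in> set (drop k xs)" using b sx unfolding S_def by auto
    have "sorted_wrt (\<lambda>a b. g b \<le> g a) (take k xs @ drop k xs)" using sw by simp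
    then show "g b \<le> g a" using a b' unfolding S_def sorted_wrt_append by blast
  qed
  ultimately show ?thesis by blast
qed

text \<open>Moving weight from the top set $S$ to elements below its minimum can only decrease the sum.\<close>

lemma sum_weighted_le_sum_top:
  fixes g c :: "nat \<Rightarrow> real"
  assumes I: "finite I" and SI: "S \<subseteq> I" and top: "\<forall>a\<in>S. \<forall>b\<in>I-S. g b \<le> g a"
    and c01: "\<forall>b\<in>I. 0 \<le> c b \<and> c b \<le> 1" and csum: "(\<Sum>b\<in>I. c b) = real (card S)"
  shows "(\<Sum>b\<in>I. c b * g b) \<le> (\<Sum>a\<in>S. g a)"
proof (cases "S = {}")
  case True
  then have "\<forall>b\<in>I. c b = 0" using csum c01 I by (simp add: sum_nonneg_eq_0_iff)
  then show ?thesis using True by simp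
next
  case False
  have fS: "finite S" using I SI finite_subset by blast
  define t where "t = Min (g ` S)"
  have tS: "\<forall>a\<in>S. t \<le> g a" using fS by (simp add: t_def)
  have "t \<in> g ` S" unfolding t_def using fS False by (intro Min_in) auto
  then have tI: "\<forall>b\<in>I-S. g b \<le> t" using top by auto
  have split: "(\<Sum>b\<in>I. f b) = (\<Sum>b\<in>I-S. f b) + (\<Sum>b\<in>S. f b)" for f :: "nat \<Rightarrow> real"
    using sum.subset_diff[OF SI I] by simp
  have "(\<Sum>b\<in>I-S. c b * g b) \<le> (\<Sum>b\<in>I-S. c b * t)"
    using c01 tI by (intro sum_mono mult_left_mono) auto
  moreover have "(\<Sum>b\<in>S. (1 - c b) * t) \<le> (\<Sum>b\<in>S. (1 - c b) * g b)"
    using c01 tS SI by (intro sum_mono mult_left_mono) auto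
  moreover have "(\<Sum>b\<in>I-S. c b * t) + (\<Sum>b\<in>S. c b * t) = real (card S) * t"
  proof -
    have "(\<Sum>b\<in>I-S. c b) + (\<Sum>b\<in>S. c b) = real (card S)" using csum split[of c] by simp
    then show ?thesis by (simp flip: sum_distrib_right distrib_right)
  qed
  ultimately show ?thesis
    using split[of "\<lambda>b. c b * g b"] by (simp add: algebra_simps sum_subtractf sum_distrib_right)
qed

definition doubly_stochastic :: "nat \<Rightarrow> (nat \<Rightarrow> nat \<Rightarrow> real) \<Rightarrow> bool" where
  "doubly_stochastic N T \<longleftrightarrow> (\<forall>a<N. \<forall>b<N. 0 \<le> T a b) \<and>
     (\<forall>a<N. (\<Sum>b<N. T a b) = 1) \<and> (\<forall>b<N. (\<Sum>a<N. T a b) = 1)"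

lemma doubly_stochastic_sum_largest_le:
  fixes g :: "nat \<Rightarrow> real"
  assumes T: "doubly_stochastic N T" and k: "k \<le> N"
  shows "sum_largest k (map (\<lambda>a. \<Sum>b<N. T a b * g b) [0..<N]) \<le> sum_largest k (map g [0..<N])"
proof -
  obtain S2 where S2: "S2 \<subseteq> {..<N}" "card S2 = k"
    "sum_largest k (map (\<lambda>a. \<Sum>b<N. T a b * g b) [0..<N]) = (\<Sum>a\<in>S2. \<Sum>b<N. T a b * g b)"
    using sum_largest_attained[OF k] by blast
  obtain S1 where S1: "S1 \<subseteq> {..<N}" "card S1 = k" "sum_largest k (map g [0..<N]) = (\<Sum>a\<in>S1. g a)"
    "\<forall>a\<in>S1. \<forall>b\<in>{..<N}-S1. g b \<le> g a"
    using sum_largest_attained[OF k] by blast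
  define c where "c b = (\<Sum>a\<in>S2. T a b)" for b
  have "(\<Sum>a\<in>S2. \<Sum>b<N. T a b * g b) = (\<Sum>b<N. c b * g b)"
    unfolding c_def by (subst sum.swap) (simp add: sum_distrib_right)
  also have "\<dots> \<le> (\<Sum>a\<in>S1. g a)"
  proof (rule sum_weighted_le_sum_top[OF _ S1(1) S1(4)])
    show "\<forall>b\<in>{..<N}. 0 \<le> c b \<and> c b \<le> 1"
    proof
      fix b assume b: "b \<in> {..<N}"
      have "0 \<le> c b" unfolding c_def using S2(1) T b by (intro sum_nonneg) (auto simp: doubly_stochastic_def)
      moreover have "c b \<le> (\<Sum>a<N. T a b)" unfolding c_def
        by (rule sum_mono2) (use S2(1) T b in \<open>auto simp: doubly_stochastic_def\<close>)
      ultimately show "0 \<le> c b \<and> c b \<le> 1" using T b by (auto simp: doubly_stochastic_def)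
    qed
    have "(\<Sum>b<N. c b) = (\<Sum>a\<in>S2. \<Sum>b<N. T a b)" unfolding c_def by (rule sum.swap)
    also have "\<dots> = (\<Sum>a\<in>S2. 1)" using S2(1) T by (intro sum.cong) (auto simp: doubly_stochastic_def)
    finally show "(\<Sum>b<N. c b) = real (card S1)" using S1(2) S2(2) by simp
  qed simp
  finally show ?thesis using S1(3) S2(3) by simp
qed

lemma doubly_stochastic_kron_id:
  assumes S: "doubly_stochastic n S"
  shows "doubly_stochastic (n * m) (\<lambda>a b. if a mod m = b mod m then S (a div m) (b div m) else 0)"
proof -
  have "(\<Sum>b<n*m. if a mod m = b mod m then S (a div m) (b div m) else 0) = (\<Sum>i<n. S (a div m) i)"
    "(\<Sum>b<n*m. if b mod m = a mod m then S (b div m) (a div m) else 0) = (\<Sum>i<n. S i (a div m))"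
    if "a < n * m" for a
    using div_mod_less_mult[OF that]
    by (simp_all add: sum_lessThan_mult_div_mod[where f = "\<lambda>i j. if a mod m = j then S (a div m) i else 0"]
        sum_lessThan_mult_div_mod[where f = "\<lambda>i j. if j = a mod m then S i (a div m) else 0"])
  then show ?thesis
    using S div_mod_less_mult unfolding doubly_stochastic_def by auto
qed

lemma sum_largest_kron_mixing_le:
  fixes w \<nu> :: "nat \<Rightarrow> real"
  assumes S: "doubly_stochastic n S" and k: "k \<le> n * m"
  shows "sum_largest k (map (\<lambda>a. (\<Sum>i<n. S (a div m) i * w i) * \<nu> (a mod m)) [0..<n*m])
       \<le> sum_largest k (map (\<lambda>a. w (a div m) * \<nu> (a mod m)) [0..<n*m])"
proof -
  define T where "T a b = (if a mod m = b mod m then S (a div m) (b div m) else 0)" for a b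
  have "(\<Sum>b<n*m. T a b * (w (b div m) * \<nu> (b mod m))) = (\<Sum>i<n. S (a div m) i * w i) * \<nu> (a mod m)"
    if "a < n * m" for a
  proof -
    have "(\<Sum>b<n*m. T a b * (w (b div m) * \<nu> (b mod m)))
        = (\<Sum>i<n. \<Sum>j<m. (if a mod m = j then S (a div m) i else 0) * (w i * \<nu> j))"
      unfolding T_def by (rule sum_lessThan_mult_div_mod)
    also have "\<dots> = (\<Sum>i<n. S (a div m) i * (w i * \<nu> (a mod m)))"
    proof -
      have "(if a mod m = j then S (a div m) i else 0) * (w i * \<nu> j)
          = (if a mod m = j then S (a div m) i * (w i * \<nu> j) else 0)" for i j
        by simp
      then show ?thesis using div_mod_less_mult[OF that] by (simp only: sum.delta' finite_lessThan lessThan_iff if_True)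
    qed
    finally show ?thesis by (simp add: sum_distrib_left sum_distrib_right mult_ac)
  qed
  then have eq: "map (\<lambda>a. (\<Sum>i<n. S (a div m) i * w i) * \<nu> (a mod m)) [0..<n*m]
      = map (\<lambda>a. \<Sum>b<n*m. T a b * (w (b div m) * \<nu> (b mod m))) [0..<n*m]"
    by simp
  show ?thesis unfolding eq
    by (rule doubly_stochastic_sum_largest_le[OF doubly_stochastic_kron_id[OF S, of m, folded T_def] k])
qed

section \<open>States diagonal in an orthonormal basis\<close>

definition basis_mat :: "nat \<Rightarrow> (nat \<Rightarrow> complex vec) \<Rightarrow> complex mat" where
  "basis_mat n e = mat n n (\<lambda>(i,k). e k $ i)"

lemma basis_mat_carrier[simp]: "basis_mat n e \<in> carrier_mat n n"
  and basis_mat_dims[simp]: "dim_row (basis_mat n e) = n" "dim_col (basis_mat n e) = n"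
  by (simp_all add: basis_mat_def)

lemma unitary_basis_mat: assumes "orthonormal_basis n e" shows "unitary n (basis_mat n e)"
proof -
  have ec: "\<And>i. i < n \<Longrightarrow> e i \<in> carrier_vec n"
    and eo: "\<And>i j. i < n \<Longrightarrow> j < n \<Longrightarrow> e i \<bullet>c e j = (if i = j then 1 else 0)"
    using assms by (auto simp: orthonormal_basis_def)
  have "adj (basis_mat n e) * basis_mat n e = 1\<^sub>m n"
  proof (rule eq_matI)
    fix i j assume "i < dim_row (1\<^sub>m n)" "j < dim_col (1\<^sub>m n)"
    then have i: "i < n" and j: "j < n" by auto
    have "(adj (basis_mat n e) * basis_mat n e) $$ (i,j) = e j \<bullet>c e i"
      using i j ec[OF i] ec[OF j] by (simp add: basis_mat_def scalar_prod_def atLeast0LessThan mult.commute)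
    then show "(adj (basis_mat n e) * basis_mat n e) $$ (i,j) = 1\<^sub>m n $$ (i,j)" using eo[OF j i] i j by auto
  qed (auto simp: basis_mat_def)
  then show ?thesis by (simp add: unitary_def)
qed

lemma diag_in_conj: "diag_in n e w = basis_mat n e * mat_diag n (\<lambda>k. complex_of_real (w k)) * adj (basis_mat n e)"
proof (rule eq_matI)
  fix i j assume "i < dim_row (basis_mat n e * mat_diag n (\<lambda>k. complex_of_real (w k)) * adj (basis_mat n e))"
    "j < dim_col (basis_mat n e * mat_diag n (\<lambda>k. complex_of_real (w k)) * adj (basis_mat n e))"
  then have i: "i < n" and j: "j < n" by auto
  show "diag_in n e w $$ (i,j) = (basis_mat n e * mat_diag n (\<lambda>k. complex_of_real (w k)) * adj (basis_mat n e)) $$ (i,j)"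
    using i j by (subst conj_mat_diag_index[OF basis_mat_carrier i j]) (simp add: diag_in_def basis_mat_def algebra_simps)
qed (auto simp: diag_in_def)

lemma quad_form_basis_mat:
  assumes e: "orthonormal_basis n e" and X: "X \<in> carrier_mat n n" and k: "k < n"
  shows "(adj (basis_mat n e) * X * basis_mat n e) $$ (k,k) = (X *\<^sub>v e k) \<bullet>c e k"
proof -
  have "col (basis_mat n e) k = e k"
    using e k by (auto simp: orthonormal_basis_def basis_mat_def intro!: eq_vecI)
  moreover have "(adj B * (X * B)) $$ (k,k) = (X *\<^sub>v col B k) \<bullet>c col B k" if "B \<in> carrier_mat n n" for B
    using X that k by (simp add: scalar_prod_def atLeast0LessThan mult.commute)
  ultimately show ?thesis using X by (simp add: assoc_mult_mat_dims)
qed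

lemma quad_form_diag_in:
  assumes "orthonormal_basis n f" "orthonormal_basis n e" "k < n"
  shows "(diag_in n f w *\<^sub>v e k) \<bullet>c e k = complex_of_real (\<Sum>i<n. w i * (cmod (f i \<bullet>c e k))\<^sup>2)"
proof -
  define E F where "E = basis_mat n e" and "F = basis_mat n f"
  have G: "adj E * F \<in> carrier_mat n n" unfolding E_def F_def by simp
  have "(adj E * F) $$ (k,i) = f i \<bullet>c e k" if "i < n" for i
    using assms that by (auto simp: E_def F_def orthonormal_basis_def basis_mat_def scalar_prod_def mult.commute)
  then show ?thesis
    using quad_form_basis_mat[OF assms(2) _ assms(3), of "diag_in n f w"]
      conj_conj_mat_diag[OF unitary_basis_mat[OF assms(1)] unitary_basis_mat[OF assms(2)]]
      conj_mat_diag_real_index[OF G assms(3)]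
    by (simp add: diag_in_conj[of n f] E_def F_def)
qed

lemma quad_form_diag_in_self:
  assumes "orthonormal_basis n e" "k < n"
  shows "(diag_in n e w *\<^sub>v e k) \<bullet>c e k = complex_of_real (w k)"
proof -
  have "(\<Sum>i<n. w i * (cmod (e i \<bullet>c e k))\<^sup>2) = (\<Sum>i<n. if i = k then w k else 0)"
    using assms by (intro sum.cong) (auto simp: orthonormal_basis_def)
  also have "\<dots> = w k" using assms(2) by simp
  finally have "(\<Sum>i<n. w i * (cmod (e i \<bullet>c e k))\<^sup>2) = w k" .
  then show ?thesis by (simp only: quad_form_diag_in[OF assms(1) assms])
qed

lemma adj_diag_in: "adj (diag_in n e r) = diag_in n e r"
  by (rule eq_matI) (auto simp: diag_in_def mult_ac)

lemma psd_mat_conj_mat_diag: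
  assumes U: "U \<in> carrier_mat n n" and v: "v \<in> carrier_vec n" and r: "\<And>i. i < n \<Longrightarrow> 0 \<le> r i"
  shows "0 \<le> Re (((U * mat_diag n (\<lambda>i. complex_of_real (r i)) * adj U) *\<^sub>v v) \<bullet>c v)"
proof -
  define B where "B = mat n 1 (\<lambda>(a,_). v $ a)"
  define G where "G = adj B * U"
  have B: "B \<in> carrier_mat n 1" and G: "G \<in> carrier_mat 1 n"
    using U by (auto simp: B_def G_def intro: mult_carrier_mat)
  have "adj G = adj U * B" unfolding G_def by (subst adj_mult) (use U B in auto)
  then have GB: "adj B * (U * mat_diag n (\<lambda>i. complex_of_real (r i)) * adj U) * B
      = G * mat_diag n (\<lambda>i. complex_of_real (r i)) * adj G"
    using U B unfolding G_def by (simp add: assoc_mult_mat_dims)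
  have quad: "(X *\<^sub>v v) \<bullet>c v = (adj B * X * B) $$ (0,0)" if "X \<in> carrier_mat n n" for X
    using that v by (simp add: B_def assoc_mult_mat_dims scalar_prod_def atLeast0LessThan mult.commute)
  have "((U * mat_diag n (\<lambda>i. complex_of_real (r i)) * adj U) *\<^sub>v v) \<bullet>c v
      = (G * mat_diag n (\<lambda>i. complex_of_real (r i)) * adj G) $$ (0,0)"
    unfolding GB[symmetric] by (rule quad) (use U in simp)
  also have "\<dots> = complex_of_real (\<Sum>l<n. r l * (cmod (G $$ (0,l)))\<^sup>2)"
    by (rule conj_mat_diag_real_index[OF G]) simp
  finally have "((U * mat_diag n (\<lambda>i. complex_of_real (r i)) * adj U) *\<^sub>v v) \<bullet>c v
      = complex_of_real (\<Sum>l<n. r l * (cmod (G $$ (0,l)))\<^sup>2)" .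
  then show ?thesis using r by (auto intro!: sum_nonneg)
qed

lemma mtrace_eq_sum_quad_form:
  assumes e: "orthonormal_basis n e" and X: "X \<in> carrier_mat n n"
  shows "mtrace X = (\<Sum>k<n. (X *\<^sub>v e k) \<bullet>c e k)"
proof -
  define E where "E = basis_mat n e"
  note u = unitaryD[OF unitary_basis_mat[OF e, folded E_def]]
  have "(\<Sum>k<n. (X *\<^sub>v e k) \<bullet>c e k) = (\<Sum>k<n. (adj E * X * E) $$ (k,k))"
    using quad_form_basis_mat[OF e X] by (simp add: E_def)
  also have "\<dots> = (\<Sum>k<n. (adj E * (X * E)) $$ (k,k))" using X u by (simp add: assoc_mult_mat_dims)
  also have "\<dots> = (\<Sum>a<n. (X * E * adj E) $$ (a,a))"
    by (rule trace_mult_comm[symmetric]) (use X u in auto)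
  also have "\<dots> = mtrace X" using X u by (simp add: mtrace_def assoc_mult_mat_dims)
  finally show ?thesis by simp
qed

lemma density_mat_diag_in:
  assumes e: "orthonormal_basis n e" and r: "\<And>k. k < n \<Longrightarrow> 0 \<le> r k" and "(\<Sum>k<n. r k) = 1"
  shows "density_mat n (diag_in n e r)"
proof -
  have D: "diag_in n e r \<in> carrier_mat n n" by (simp add: diag_in_def)
  have "0 \<le> Re ((diag_in n e r *\<^sub>v v) \<bullet>c v)" if "v \<in> carrier_vec n" for v
    unfolding diag_in_conj by (rule psd_mat_conj_mat_diag[OF basis_mat_carrier that r])
  moreover have "mtrace (diag_in n e r) = 1"
    using assms by (simp add: mtrace_eq_sum_quad_form[OF e D] quad_form_diag_in_self flip: of_real_sum)
  ultimately show ?thesis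
    using D by (simp add: density_mat_def psd_mat_def hermitian_mat_def adj_diag_in)
qed

lemma diag_in_minus: "diag_in n e a - diag_in n e b = diag_in n e (\<lambda>k. a k - b k)"
  by (rule eq_matI) (auto simp: diag_in_def sum_subtractf algebra_simps)

lemma trace_norm_diag_in:
  assumes "orthonormal_basis n e" shows "trace_norm (diag_in n e r) = (\<Sum>k<n. \<bar>r k\<bar>)"
  unfolding diag_in_conj by (simp add: trace_norm_conj_mat_diag[OF unitary_basis_mat[OF assms]])

lemma sum_quad_form_le_trace_norm:
  assumes e: "orthonormal_basis n e" and X: "X \<in> carrier_mat n n" "adj X = X"
  shows "(\<Sum>k<n. cmod ((X *\<^sub>v e k) \<bullet>c e k)) \<le> trace_norm X"
proof -
  obtain U r where U: "unitary n U" and Xeq: "X = U * mat_diag n (\<lambda>i. complex_of_real (r i)) * adj U"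
    using hermitian_spectral[OF X] by blast
  have "(\<Sum>k<n. cmod ((X *\<^sub>v e k) \<bullet>c e k)) \<le> (\<Sum>i<n. \<bar>r i\<bar>)"
    using pinching_diag_le_trace_norm[OF U unitary_basis_mat[OF e], of r] quad_form_basis_mat[OF e X(1)]
    by (simp add: Xeq)
  also have "\<dots> = trace_norm X" by (simp add: Xeq trace_norm_conj_mat_diag[OF U])
  finally show ?thesis .
qed

lemma trace_dist_pinching_le:
  assumes e: "orthonormal_basis n e" and W': "W' \<in> carrier_mat n n" "adj W' = W'"
  shows "trace_dist (diag_in n e w) (diag_in n e (\<lambda>k. Re ((W' *\<^sub>v e k) \<bullet>c e k)))
       \<le> trace_dist (diag_in n e w) W'"
proof -
  define X where "X = diag_in n e w - W'"
  have Xc: "X \<in> carrier_mat n n" unfolding X_def by (rule minus_carrier_mat[OF W'(1)])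
  have "adj X = X"
  proof (rule eq_matI)
    fix i j assume "i < dim_row X" "j < dim_col X"
    then have i: "i < n" and j: "j < n" using Xc by auto
    show "adj X $$ (i,j) = X $$ (i,j)"
      using hermitian_index[OF W'(2,1) i j] W' i j by (simp add: X_def diag_in_def mult_ac)
  qed (use Xc in auto)
  note X = Xc this
  have "w k - Re ((W' *\<^sub>v e k) \<bullet>c e k) = Re ((X *\<^sub>v e k) \<bullet>c e k)" if k: "k < n" for k
  proof -
    have ek: "e k \<in> carrier_vec n" using e k by (simp add: orthonormal_basis_def)
    have D: "diag_in n e w \<in> carrier_mat n n" by (simp add: diag_in_def)
    have "(X *\<^sub>v e k) \<bullet>c e k = (diag_in n e w *\<^sub>v e k) \<bullet>c e k - (W' *\<^sub>v e k) \<bullet>c e k"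
      unfolding X_def minus_mult_distrib_mat_vec[OF D W'(1) ek]
      by (rule minus_scalar_prod_distrib[of _ n]) (use D W' ek in auto)
    then show ?thesis using quad_form_diag_in_self[OF e k, of w] by simp
  qed
  then have "(\<Sum>k<n. \<bar>w k - Re ((W' *\<^sub>v e k) \<bullet>c e k)\<bar>) \<le> (\<Sum>k<n. cmod ((X *\<^sub>v e k) \<bullet>c e k))"
    by (intro sum_mono) (simp add: abs_Re_le_cmod)
  also have "\<dots> \<le> trace_norm X" by (rule sum_quad_form_le_trace_norm[OF e X])
  finally show ?thesis
    by (simp add: trace_dist_def X_def diag_in_minus trace_norm_diag_in[OF e])
qed

lemma doubly_stochastic_overlaps:
  assumes "orthonormal_basis n e" "orthonormal_basis n f"
  shows "doubly_stochastic n (\<lambda>k i. (cmod (f i \<bullet>c e k))\<^sup>2)"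
proof -
  define G where "G = adj (basis_mat n e) * basis_mat n f"
  have uG: "unitary n G"
    unfolding G_def by (rule unitary_mult[OF unitary_adj[OF unitary_basis_mat[OF assms(1)]] unitary_basis_mat[OF assms(2)]])
  have "G $$ (k,i) = f i \<bullet>c e k" if "k < n" "i < n" for k i
    using assms that by (auto simp: G_def orthonormal_basis_def basis_mat_def scalar_prod_def mult.commute)
  then show ?thesis
    using unitary_row_norms[OF uG] unitary_col_norms[OF uG] by (simp add: doubly_stochastic_def)
qed

lemma eig_list_kron_diag_in:
  assumes M: "M \<in> carrier_mat m m"
  shows "\<exists>\<nu>. \<forall>n e r. orthonormal_basis n e \<longrightarrow>
     mset (eig_list (kron (diag_in n e r) M)) = mset (map (\<lambda>a. r (a div m) * \<nu> (a mod m)) [0..<n*m])"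
proof -
  obtain \<mu> where \<mu>: "\<And>n U d. unitary n U \<Longrightarrow>
     eigvals (kron (U * mat_diag n d * adj U) M) = mset (map (\<lambda>a. d (a div m) * \<mu> (a mod m)) [0..<n*m])"
    using eigvals_kron_conj_mat_diag[OF M] by blast
  have "mset (eig_list (kron (diag_in n e r) M)) = mset (map (\<lambda>a. r (a div m) * Re (\<mu> (a mod m))) [0..<n*m])"
    if "orthonormal_basis n e" for n e r
    unfolding eig_list_def diag_in_conj
    by (simp add: \<mu>[OF unitary_basis_mat[OF that]] mset_map[symmetric] o_def del: mset_map)
  then show ?thesis by (intro exI[of _ "\<lambda>j. Re (\<mu> j)"]) blast
qed

lemma length_eig_list_kron_diag_in:
  assumes "M \<in> carrier_mat m m" "orthonormal_basis n e"
  shows "length (eig_list (kron (diag_in n e r) M)) = n * m"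
proof -
  obtain \<nu> where "\<forall>n e r. orthonormal_basis n e \<longrightarrow>
      mset (eig_list (kron (diag_in n e r) M)) = mset (map (\<lambda>a. r (a div m) * \<nu> (a mod m)) [0..<n*m])"
    using eig_list_kron_diag_in[OF assms(1)] by (elim exE)
  then have "size (mset (eig_list (kron (diag_in n e r) M))) = n * m" using assms(2) by simp
  then show ?thesis by simp
qed

lemma density_mat_pinching:
  assumes e: "orthonormal_basis n e" and W: "density_mat n W"
  shows "density_mat n (diag_in n e (\<lambda>k. Re ((W *\<^sub>v e k) \<bullet>c e k)))"
proof (rule density_mat_diag_in[OF e])
  have W': "W \<in> carrier_mat n n" "psd_mat W" "mtrace W = 1"
    using W by (auto simp: density_mat_def)
  show "0 \<le> Re ((W *\<^sub>v e k) \<bullet>c e k)" if "k < n" for k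
    using W' e that unfolding psd_mat_def orthonormal_basis_def by simp
  show "(\<Sum>k<n. Re ((W *\<^sub>v e k) \<bullet>c e k)) = 1"
    using mtrace_eq_sum_quad_form[OF e W'(1)] W'(3) by (simp flip: Re_sum)
qed

lemma majorizes_kron_diag_in_mixing:
  assumes M: "M \<in> carrier_mat m m" and e: "orthonormal_basis n e" and f: "orthonormal_basis n f"
    and S: "doubly_stochastic n S" and wt: "\<And>k. k < n \<Longrightarrow> wt k = (\<Sum>i<n. S k i * w i)"
    and maj: "majorizes xs (eig_list (kron (diag_in n f w) M))" and len: "length xs = n * m"
  shows "majorizes xs (eig_list (kron (diag_in n e wt) M))"
proof -
  obtain \<nu> where \<nu>: "\<forall>n e r. orthonormal_basis n e \<longrightarrow>
      mset (eig_list (kron (diag_in n e r) M)) = mset (map (\<lambda>a. r (a div m) * \<nu> (a mod m)) [0..<n*m])"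
    using eig_list_kron_diag_in[OF M] by (elim exE)
  have spec_f: "mset (eig_list (kron (diag_in n f w) M)) = mset (map (\<lambda>a. w (a div m) * \<nu> (a mod m)) [0..<n*m])"
    using \<nu> f by blast
  have maps: "map (\<lambda>a. wt (a div m) * \<nu> (a mod m)) [0..<n*m]
      = map (\<lambda>a. (\<Sum>i<n. S (a div m) i * w i) * \<nu> (a mod m)) [0..<n*m]"
  proof (rule map_cong[OF refl])
    fix a assume "a \<in> set [0..<n*m]"
    then have "a div m < n" by (simp add: less_mult_imp_div_less)
    then show "wt (a div m) * \<nu> (a mod m) = (\<Sum>i<n. S (a div m) i * w i) * \<nu> (a mod m)" by (simp add: wt)
  qed
  have spec_e: "mset (eig_list (kron (diag_in n e wt) M))
      = mset (map (\<lambda>a. (\<Sum>i<n. S (a div m) i * w i) * \<nu> (a mod m)) [0..<n*m])"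
    unfolding maps[symmetric] using \<nu> e by blast
  show ?thesis
  proof (rule majorizes_mono_right[OF maj])
    show "length (eig_list (kron (diag_in n f w) M)) = length xs"
      "length (eig_list (kron (diag_in n e wt) M)) = length xs"
      using len length_eig_list_kron_diag_in[OF M] e f by simp_all
    show "\<forall>k\<le>length xs. sum_largest k (eig_list (kron (diag_in n e wt) M))
                     \<le> sum_largest k (eig_list (kron (diag_in n f w) M))"
    proof (intro allI impI)
      fix k assume "k \<le> length xs"
      then have "sum_largest k (map (\<lambda>a. (\<Sum>i<n. S (a div m) i * w i) * \<nu> (a mod m)) [0..<n*m])
          \<le> sum_largest k (map (\<lambda>a. w (a div m) * \<nu> (a mod m)) [0..<n*m])"
        using len by (intro sum_largest_kron_mixing_le[OF S]) simp
      then show "sum_largest k (eig_list (kron (diag_in n e wt) M))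
               \<le> sum_largest k (eig_list (kron (diag_in n f w) M))"
        by (simp only: sum_largest_mset_cong[OF spec_e] sum_largest_mset_cong[OF spec_f])
    qed
  qed
qed

theorem mainTheorem2:
  fixes n m :: nat and e f :: "nat \<Rightarrow> complex vec" and w w' :: "nat \<Rightarrow> real"
    and W W' :: "complex mat" and z :: "complex vec"
  assumes "m \<ge> 2"
    and "z \<in> carrier_vec m" and "z \<bullet>c z = 1"
    and "orthonormal_basis n e" and "orthonormal_basis n f"
    and "density_mat n W" and "density_mat n W'"
    and "W = diag_in n e w" and "W' = diag_in n f w'"
    and "mat_succ (kron W ((1 / of_nat m) \<cdot>\<^sub>m 1\<^sub>m m)) (kron W' (ket_bra z z))"
  shows "\<exists>wt :: nat \<Rightarrow> real.
           density_mat n (diag_in n e wt) \<and>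
           trace_dist W W' \<ge> trace_dist W (diag_in n e wt) \<and>
           mat_succ (kron W ((1 / of_nat m) \<cdot>\<^sub>m 1\<^sub>m m)) (kron (diag_in n e wt) (ket_bra z z))"
proof -
  let ?L = "(1 / of_nat m) \<cdot>\<^sub>m 1\<^sub>m m :: complex mat"
  have W': "W' \<in> carrier_mat n n" "adj W' = W'"
    using assms(7) by (auto simp: density_mat_def psd_mat_def hermitian_mat_def)
  define wt where "wt = (\<lambda>k. Re ((W' *\<^sub>v e k) \<bullet>c e k))"
  have "density_mat n (diag_in n e wt)"
    unfolding wt_def by (rule density_mat_pinching[OF assms(4,7)])
  moreover have "trace_dist W (diag_in n e wt) \<le> trace_dist W W'"
    unfolding wt_def assms(8) by (rule trace_dist_pinching_le[OF assms(4) W'])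
  moreover have "mat_succ (kron W ?L) (kron (diag_in n e wt) (ket_bra z z))"
    unfolding mat_succ_def
  proof (rule majorizes_kron_diag_in_mixing[OF _ assms(4,5) doubly_stochastic_overlaps[OF assms(4,5)]])
    show "ket_bra z z \<in> carrier_mat m m" using assms(2) by (simp add: ket_bra_def)
    show "wt k = (\<Sum>i<n. (cmod (f i \<bullet>c e k))\<^sup>2 * w' i)" if "k < n" for k
      using quad_form_diag_in[OF assms(5,4) that, of w'] assms(9) by (simp add: wt_def mult.commute)
    show "majorizes (eig_list (kron W ?L)) (eig_list (kron (diag_in n f w') (ket_bra z z)))"
      using assms(9,10) by (simp add: mat_succ_def)
    show "length (eig_list (kron W ?L)) = n * m"
      unfolding assms(8) by (rule length_eig_list_kron_diag_in[OF _ assms(4)]) simp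
  qed
  ultimately show ?thesis by blast
qed

end
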